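(* Let $f(z)=z+\sum_{n=2}^{\infty}a_nz^n\in\mathcal{S}^{*}_{\rho}$. Then $$|H_{4,1}(f)|\le 0.428001,\qquad\text{where}\quad H_{4,1}(f)=\det\begin{pmatrix}1&a_2&a_3&a_4\\ a_2&a_3&a_4&a_5\\ a_3&a_4&a_5&a_6\\ a_4&a_5&a_6&a_7\end{pmatrix}.$$
   Context: Let $\mathbb{D}=\{z\in\mathbb{C}:|z|<1\}$. For analytic $g_1,g_2$ on $\mathbb{D}$, $g_1\prec g_2$ means there is an analytic $w:\mathbb{D}\to\mathbb{D}$ with $w(0)=0$ such that $g_1=g_2\circ w$. Here $\sinh^{-1}$ denotes the principal branch of the inverse hyperbolic sine with $\sinh^{-1}(0)=0$, analytic on $\mathbb{D}$. The class $\mathcal{S}^{*}_{\rho}$ consists of all univalent analytic functions $f$ on $\mathbb{D}$ with $f(z)=z+\sum_{n\ge2}a_nz^n$ such that $\frac{zf'(z)}{f(z)}\prec 1+\sinh^{-1}(z)$. *)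

theory Defs
  imports "HOL-Complex_Analysis.Complex_Analysis"
begin

definition subordinate :: "(complex \<Rightarrow> complex) \<Rightarrow> (complex \<Rightarrow> complex) \<Rightarrow> bool" where
  "subordinate g1 g2 \<longleftrightarrow> (\<exists>w. w holomorphic_on ball 0 1 \<and> w ` ball 0 1 \<subseteq> ball 0 1 \<and>
      w 0 = 0 \<and> (\<forall>z\<in>ball 0 1. g1 z = g2 (w z)))"

definition taylor_coeff :: "(complex \<Rightarrow> complex) \<Rightarrow> nat \<Rightarrow> complex" where
  "taylor_coeff f n = (deriv ^^ n) f 0 / fact n"

text \<open>The class S*_rho: normalized univalent analytic functions on the disc with
  z f'(z)/f(z) (extended by its limit 1 at z = 0) subordinate to 1 + arsinh z (principal branch, library arsinh).\<close>
definition S_star_rho :: "(complex \<Rightarrow> complex) set" where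
  "S_star_rho = {f. f holomorphic_on ball 0 1 \<and> inj_on f (ball 0 1) \<and> f 0 = 0 \<and> deriv f 0 = 1 \<and>
      subordinate (\<lambda>z. if z = 0 then 1 else z * deriv f z / f z) (\<lambda>z. 1 + arsinh z)}"

definition hankel41 :: "(complex \<Rightarrow> complex) \<Rightarrow> complex" where
  "hankel41 f = (let a = (\<lambda>n. if n = 1 then 1 else taylor_coeff f n);
                     M = (\<lambda>i j. a (i + j + 1)) in
     (\<Sum>p | p permutes {0..<4::nat}. of_int (sign p) * (\<Prod>i<4. M i (p i))))"

end

theory Submission
  imports Defs
begin

text \<open>Write \<open>z f'(z) / f(z) = 1 + arsinh (w z)\<close> with a Schwarz function
  \<open>w z = c_1 z + c_2 z^2 + ...\<close>. Comparing coefficients (through \<open>p = arsinh o w\<close>, which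
  satisfies \<open>exp (2 p) = 2 w exp p + 1\<close>) turns \<open>a_2, ..., a_7\<close>, and hence \<open>H_{4,1}(f)\<close>,
  into an explicit polynomial in \<open>c_1, ..., c_6\<close>. As \<open>|c_n| \<le> 1\<close> and
  \<open>|c_2| \<le> 1 - |c_1|^2\<close>, the triangle inequality bounds \<open>|H_{4,1}(f)|\<close> by a polynomial in
  \<open>x = |c_1|\<close> and \<open>y = |c_2|\<close> with nonnegative coefficients. It increases in both variables,
  so after cutting the region \<open>0 \<le> y \<le> 1 - x^2\<close> into four strips in \<open>x\<close> it is bounded by
  its values at four points, all below \<open>0.428001\<close>.\<close>

section \<open>The complex inverse hyperbolic sine\<close>

lemma arsinh_complex_eq: "arsinh (u::complex) = Ln (u + csqrt (u\<^sup>2 + 1))"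
  by (simp add: arsinh_def csqrt_conv_powr)

lemma arsinh_complex_arg_nonzero: "u + csqrt (u\<^sup>2 + 1) \<noteq> (0::complex)"
proof
  assume "u + csqrt (u\<^sup>2 + 1) = 0"
  then have "csqrt (u\<^sup>2 + 1) = - u"
    by (simp add: add_eq_0_iff)
  then have "(csqrt (u\<^sup>2 + 1))\<^sup>2 = u\<^sup>2"
    by simp
  then show False
    by simp
qed

lemma exp_arsinh_complex: "exp (arsinh u) = u + csqrt (u\<^sup>2 + 1)"
  using arsinh_complex_arg_nonzero[of u] by (simp add: arsinh_complex_eq)

text \<open>The identity \<open>sinh (arsinh u) = u\<close>, multiplied by \<open>2 exp (arsinh u)\<close>.\<close>
lemma exp_arsinh_quadratic: "exp (arsinh u) * exp (arsinh u) = 2 * (u * exp (arsinh u)) + (1::complex)"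
proof -
  have "(csqrt (u\<^sup>2 + 1))\<^sup>2 = u\<^sup>2 + 1"
    by simp
  then show ?thesis
    unfolding exp_arsinh_complex by algebra
qed

lemma holomorphic_on_arsinh_ball: "arsinh holomorphic_on ball (0::complex) 1"
proof -
  have radicand: "u\<^sup>2 + 1 \<notin> \<real>\<^sub>\<le>\<^sub>0" if "u \<in> ball 0 1" for u :: complex
  proof -
    have "\<bar>Re (u\<^sup>2)\<bar> \<le> cmod (u\<^sup>2)"
      by (rule abs_Re_le_cmod)
    also have "\<dots> < 1"
      using that by (simp add: norm_power power_less_one_iff)
    finally have "Re (u\<^sup>2 + 1) > 0"
      by simp
    then show ?thesis
      by (auto simp: complex_nonpos_Reals_iff)
  qed
  \<comment> \<open>If \<open>v = u + s\<close> were a negative real, then so would be \<open>s = (v + 1/v) / 2\<close>,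
    but a principal square root has nonnegative real part.\<close>
  have argument: "u + csqrt (u\<^sup>2 + 1) \<notin> \<real>\<^sub>\<le>\<^sub>0" for u :: complex
  proof
    define s where "s = csqrt (u\<^sup>2 + 1)"
    define v where "v = u + s"
    assume "u + csqrt (u\<^sup>2 + 1) \<in> \<real>\<^sub>\<le>\<^sub>0"
    moreover have "v \<noteq> 0"
      unfolding v_def s_def by (rule arsinh_complex_arg_nonzero)
    ultimately have v: "Im v = 0" "Re v < 0"
      unfolding v_def s_def by (auto simp: complex_nonpos_Reals_iff complex_eq_iff)
    have "s\<^sup>2 = u\<^sup>2 + 1"
      unfolding s_def by simp
    then have "(s - u) * v = 1"
      unfolding v_def by algebra
    then have "s - u = 1 / v"
      using \<open>v \<noteq> 0\<close> by (simp add: field_simps)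
    then have "s = (v + 1 / v) / 2"
      unfolding v_def by (simp add: field_simps)
    moreover have "v = of_real (Re v)"
      using v by (simp add: complex_eq_iff)
    ultimately have "s = of_real ((Re v + 1 / Re v) / 2)"
      by (metis of_real_add of_real_divide of_real_1 of_real_numeral)
    then have "Re s = (Re v + 1 / Re v) / 2"
      by (metis Re_complex_of_real)
    moreover have "Re v + 1 / Re v < 0"
      using v by (intro add_neg_neg) auto
    moreover have "Re s \<ge> 0"
      unfolding s_def using csqrt_principal[of "u\<^sup>2 + 1"] by auto
    ultimately show False
      by simp
  qed
  have "(\<lambda>u. Ln (u + csqrt (u\<^sup>2 + 1))) holomorphic_on ball 0 1"
    using radicand argument by (intro holomorphic_on_Ln' holomorphic_intros) auto
  then show ?thesis
    unfolding arsinh_complex_eq [abs_def] .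
qed

section \<open>Coefficients of Schwarz functions\<close>

lemma has_fps_expansion_eq_if_eventually_eq:
  fixes f g :: "complex \<Rightarrow> complex"
  assumes "f has_fps_expansion F" "g has_fps_expansion G" "eventually (\<lambda>z. f z = g z) (nhds 0)"
  shows "F = G"
  using assms has_fps_expansion_cong[OF assms(3) refl] fps_expansion_unique_complex by blast

lemma eventually_in_unit_ball: "eventually (\<lambda>z. z \<in> ball (0::complex) 1) (nhds 0)"
  by (rule eventually_nhds_in_open) auto

lemma self_map_unit_ball_coeff_le_1:
  fixes w :: "complex \<Rightarrow> complex"
  assumes holw: "w holomorphic_on ball 0 1" and wb: "w ` ball 0 1 \<subseteq> ball 0 1" and "n > 0"
  shows "cmod (fps_expansion w 0 $ n) \<le> 1"
proof -
  define K where "K = cmod ((deriv ^^ n) w 0 / fact n)"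
  have bound: "K * r ^ n \<le> 1" if r: "0 < r" "r < 1" for r :: real
  proof -
    have "cmod ((deriv ^^ n) w 0) \<le> fact n * 1 / r ^ n"
    proof (rule Cauchy_higher_deriv_bound[where y = 0])
      show "w holomorphic_on ball 0 r"
        using r by (intro holomorphic_on_subset[OF holw]) auto
      show "continuous_on (cball 0 r) w"
        using r by (intro continuous_on_subset[OF holomorphic_on_imp_continuous_on[OF holw]]) auto
      show "\<And>z. z \<in> ball 0 r \<Longrightarrow> w z \<in> ball 0 1"
        using wb r by (auto simp: subset_iff)
    qed (use r \<open>n > 0\<close> in auto)
    then show ?thesis
      using r unfolding K_def by (simp add: norm_divide field_simps)
  qed
  have "eventually (\<lambda>r. r \<in> {0<..<1}) (at_left (1::real))"
    by (rule eventually_at_left_real) simp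
  then have ev: "eventually (\<lambda>r. K * r ^ n \<le> 1) (at_left (1::real))"
    by eventually_elim (use bound in auto)
  have "((\<lambda>r. K * r ^ n) \<longlongrightarrow> K * 1 ^ n) (at_left 1)"
    by (intro tendsto_intros)
  then have "K * 1 ^ n \<le> 1"
    by (rule tendsto_upperbound[OF _ ev]) simp
  then show ?thesis
    by (simp add: K_def fps_expansion_def)
qed

lemma schwarz_pick_deriv_0:
  assumes holh: "h holomorphic_on ball 0 1" and hlt: "\<And>z. norm z < 1 \<Longrightarrow> cmod (h z) < 1"
  shows "cmod (deriv h 0) \<le> 1 - (cmod (h 0))\<^sup>2"
proof -
  define a where "a = h 0"
  have a1: "cmod a < 1"
    unfolding a_def using hlt[of 0] by simp
  define k where "k = (\<lambda>z. Moebius_function 0 a (h z))"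
  have holk: "k holomorphic_on ball 0 1"
    unfolding k_def
    by (rule holomorphic_on_compose_gen[OF holh Moebius_function_holomorphic[OF a1], unfolded o_def])
       (use hlt in auto)
  have k0: "k 0 = 0"
    unfolding k_def a_def by (simp add: Moebius_function_eq_zero)
  have "\<And>z. norm z < 1 \<Longrightarrow> norm (k z) < 1"
    unfolding k_def using Moebius_function_norm_lt_1[OF a1] hlt by auto
  then have dk: "norm (deriv k 0) \<le> 1"
    using Schwarz_Lemma(2)[OF holk k0, of 0] by simp
  have den: "1 - cnj a * a = of_real (1 - (cmod a)\<^sup>2)"
    using complex_norm_square[of a] by (simp add: mult.commute)
  have den_pos: "1 - (cmod a)\<^sup>2 > 0"
    using a1 by (simp add: abs_square_less_1)
  then have den_nz: "1 - cnj a * a \<noteq> 0"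
    unfolding den by (metis of_real_eq_0_iff order_less_irrefl)
  have hd: "(h has_field_derivative deriv h 0) (at 0)"
    using holh by (intro holomorphic_derivI[of h "ball 0 1"]) auto
  have "((\<lambda>z. (h z - a) / (1 - cnj a * h z)) has_field_derivative
          ((deriv h 0 - 0) * (1 - cnj a * h 0) - (h 0 - a) * (0 - cnj a * deriv h 0))
            / ((1 - cnj a * h 0) * (1 - cnj a * h 0))) (at 0)"
    by (rule DERIV_divide[OF DERIV_diff[OF hd DERIV_const] DERIV_diff[OF DERIV_const DERIV_cmult[OF hd]]])
       (use den_nz in \<open>simp add: a_def\<close>)
  then have "deriv k 0 = deriv h 0 * (1 - cnj a * a) / ((1 - cnj a * a) * (1 - cnj a * a))"
    unfolding k_def Moebius_function_simple a_def by (auto dest: DERIV_imp_deriv)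
  then have "deriv k 0 = deriv h 0 / (1 - cnj a * a)"
    using den_nz by simp
  then have "cmod (deriv h 0) \<le> cmod (1 - cnj a * a)"
    using dk den_nz by (simp add: norm_divide divide_le_eq)
  also have "\<dots> = 1 - (cmod a)\<^sup>2"
    unfolding den norm_of_real using den_pos by simp
  finally show ?thesis
    by (simp add: a_def)
qed

lemma schwarz_factor:
  fixes w :: "complex \<Rightarrow> complex"
  assumes holw: "w holomorphic_on ball 0 1" and wb: "w ` ball 0 1 \<subseteq> ball 0 1" and w0: "w 0 = 0"
  obtains h where "h holomorphic_on ball 0 1" "\<And>z. norm z < 1 \<Longrightarrow> w z = z * h z"
    "\<And>z. norm z < 1 \<Longrightarrow> cmod (h z) \<le> 1"
    "fps_expansion w 0 $ 1 = h 0" "fps_expansion w 0 $ 2 = deriv h 0"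
proof -
  have no: "\<And>z. norm z < 1 \<Longrightarrow> norm (w z) < 1"
    using wb by (auto simp: subset_iff)
  obtain h where holh: "h holomorphic_on ball 0 1" and wh: "\<And>z. norm z < 1 \<Longrightarrow> w z = z * h z"
      and dw: "deriv w 0 = h 0"
    using Schwarz3[OF holw w0] by blast
  have Hexp: "h has_fps_expansion fps_expansion h 0"
    using holh by (intro has_fps_expansion_fps_expansion) auto
  have "fps_expansion w 0 = fps_X * fps_expansion h 0"
  proof (rule has_fps_expansion_eq_if_eventually_eq)
    show "w has_fps_expansion fps_expansion w 0"
      using holw by (intro has_fps_expansion_fps_expansion) auto
    show "(\<lambda>z. z * h z) has_fps_expansion fps_X * fps_expansion h 0"
      by (intro has_fps_expansion_mult has_fps_expansion_fps_X Hexp)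
    show "eventually (\<lambda>z. w z = z * h z) (nhds 0)"
      using eventually_in_unit_ball by eventually_elim (auto intro: wh)
  qed
  then have "fps_expansion w 0 $ 1 = h 0" "fps_expansion w 0 $ 2 = deriv h 0"
    using fps_nth_fps_expansion[OF Hexp, of 0] fps_nth_fps_expansion[OF Hexp, of 1]
    by (simp_all add: numeral_2_eq_2)
  moreover have "cmod (h z) \<le> 1" if "norm z < 1" for z
  proof (cases "z = 0")
    case True
    then show ?thesis
      using Schwarz_Lemma(2)[OF holw w0 no that] dw by simp
  next
    case False
    have "cmod (z * h z) \<le> cmod z"
      using Schwarz_Lemma(1)[OF holw w0 no that] wh[OF that] by simp
    then show ?thesis
      using False by (simp add: norm_mult)
  qed
  ultimately show ?thesis
    using that holh wh by blast
qed

text \<open>Either \<open>w\<close> is a rotation, or \<open>w z / z\<close> maps the disc into itself and the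
  Schwarz--Pick inequality applies to it.\<close>
lemma schwarz_second_coeff_le:
  fixes w :: "complex \<Rightarrow> complex"
  assumes holw: "w holomorphic_on ball 0 1" and wb: "w ` ball 0 1 \<subseteq> ball 0 1" and w0: "w 0 = 0"
  shows "cmod (fps_expansion w 0 $ 2) \<le> 1 - (cmod (fps_expansion w 0 $ 1))\<^sup>2"
proof -
  obtain h where holh: "h holomorphic_on ball 0 1" and wh: "\<And>z. norm z < 1 \<Longrightarrow> w z = z * h z"
    and hle: "\<And>z. norm z < 1 \<Longrightarrow> cmod (h z) \<le> 1"
    and W1: "fps_expansion w 0 $ 1 = h 0" and W2: "fps_expansion w 0 $ 2 = deriv h 0"
    using schwarz_factor[OF holw wb w0] by blast
  show ?thesis
  proof (cases "\<exists>z. norm z < 1 \<and> cmod (h z) = 1")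
    case True
    then obtain z where z: "norm z < 1" "cmod (h z) = 1"
      by blast
    have no: "\<And>z. norm z < 1 \<Longrightarrow> norm (w z) < 1"
      using wb by (auto simp: subset_iff)
    have "(\<exists>z. norm z < 1 \<and> z \<noteq> 0 \<and> norm (w z) = norm z) \<or> norm (deriv w 0) = 1"
    proof (cases "z = 0")
      case True
      have "deriv w 0 = h 0"
        using W1 by (simp add: fps_expansion_def)
      then show ?thesis
        using z True by simp
    qed (use z wh in \<open>auto simp: norm_mult\<close>)
    then obtain \<alpha> where rot: "\<And>z. norm z < 1 \<Longrightarrow> w z = \<alpha> * z" and "norm \<alpha> = 1"
      using Schwarz_Lemma(3)[OF holw w0 no z(1)] by blast
    have "fps_expansion w 0 = fps_const \<alpha> * fps_X"
    proof (rule has_fps_expansion_eq_if_eventually_eq)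
      show "w has_fps_expansion fps_expansion w 0"
        using holw by (intro has_fps_expansion_fps_expansion) auto
      show "(\<lambda>z. \<alpha> * z) has_fps_expansion fps_const \<alpha> * fps_X"
        by (intro has_fps_expansion_cmult_left has_fps_expansion_fps_X)
      show "eventually (\<lambda>z. w z = \<alpha> * z) (nhds 0)"
        using eventually_in_unit_ball by eventually_elim (auto intro: rot)
    qed
    then show ?thesis
      using \<open>norm \<alpha> = 1\<close> by (simp add: numeral_2_eq_2)
  next
    case False
    then have "cmod (h z) < 1" if "norm z < 1" for z
      using hle[OF that] that by (auto simp: order_le_less)
    then show ?thesis
      using schwarz_pick_deriv_0[OF holh] W1 W2 by simp
  qed
qed

section \<open>Coefficients of functions in \<open>S_star_rho\<close>\<close>

lemma atMost_1_nat: "{..1::nat} = {0, 1}"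
  by auto

text \<open>For solving coefficient recursions one coefficient at a time: indices must stay numerals
  (not \<open>Suc 0\<close>) so that earlier coefficients can be substituted, and \<open>(1/2) * x\<close> must
  not become \<open>x / 2\<close>, on which \<open>algebra\<close> is very slow.\<close>
bundle coeff_recursion_simps =
  One_nat_def [simp del] times_divide_eq_left [simp del] times_divide_eq_right [simp del]
  atMost_nat_numeral [simp] atMost_1_nat [simp] One_nat_def [symmetric, simp]

text \<open>Power series of the functions in the proof: \<open>F\<close> of \<open>f\<close>, \<open>W\<close> of the Schwarz
  function \<open>w\<close>, \<open>P\<close> of \<open>arsinh o w\<close> and \<open>E = exp P\<close>; the identity
  \<open>E * E = 2 W E + 1\<close> says \<open>W = sinh P\<close>.\<close>
lemma sinh_fps_coeffs:
  fixes W E :: "complex fps"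
  assumes sq: "E * E = fps_const 2 * (W * E) + 1" and "E $ 0 = 1" "W $ 0 = 0"
  defines "c \<equiv> fps_nth W" and "e \<equiv> fps_nth E"
  shows "e 1 = c 1" "e 2 = c 2 + (1/2) * c 1 ^ 2" "e 3 = c 3 + c 1 * c 2"
    "e 4 = c 4 + (1/2) * c 2 ^ 2 + c 1 * c 3 - (1/8) * c 1 ^ 4"
    "e 5 = c 5 + c 2 * c 3 + c 1 * c 4 - (1/2) * c 1 ^ 3 * c 2"
    "e 6 = c 6 + (1/2) * c 3 ^ 2 + c 2 * c 4 + c 1 * c 5
      - (3/4) * c 1 ^ 2 * c 2 ^ 2 - (1/2) * c 1 ^ 3 * c 3 + (1/16) * c 1 ^ 6"
proof -
  include coeff_recursion_simps
  have rec: "(\<Sum>i\<le>n. e i * e (n - i)) = 2 * (\<Sum>i\<le>n. c i * e (n - i))" if "n \<ge> 1" for n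
    using arg_cong[OF sq, of "\<lambda>X. X $ n"] that
    by (simp only: fps_mult_left_const_nth fps_add_nth fps_one_nth)
       (simp add: fps_mult_nth atLeast0AtMost e_def c_def sum_distrib_left)
  have e0: "e 0 = 1" and c0: "c 0 = 0"
    using assms by (simp_all add: e_def c_def)
  show e1: "e 1 = c 1"
    using rec[of 1] by (simp add: e0 c0; algebra)
  show e2: "e 2 = c 2 + (1/2) * c 1 ^ 2"
    using rec[of 2] by (simp add: e0 c0 e1; algebra)
  show e3: "e 3 = c 3 + c 1 * c 2"
    using rec[of 3] by (simp add: e0 c0 e1 e2; algebra)
  show e4: "e 4 = c 4 + (1/2) * c 2 ^ 2 + c 1 * c 3 - (1/8) * c 1 ^ 4"
    using rec[of 4] by (simp add: e0 c0 e1 e2 e3; algebra)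
  show e5: "e 5 = c 5 + c 2 * c 3 + c 1 * c 4 - (1/2) * c 1 ^ 3 * c 2"
    using rec[of 5] by (simp add: e0 c0 e1 e2 e3 e4; algebra)
  show "e 6 = c 6 + (1/2) * c 3 ^ 2 + c 2 * c 4 + c 1 * c 5
      - (3/4) * c 1 ^ 2 * c 2 ^ 2 - (1/2) * c 1 ^ 3 * c 3 + (1/16) * c 1 ^ 6"
    using rec[of 6] by (simp add: e0 c0 e1 e2 e3 e4 e5; algebra)
qed

lemma arsinh_fps_coeffs:
  fixes W P E :: "complex fps"
  assumes sq: "E * E = fps_const 2 * (W * E) + 1" and dv: "fps_deriv E = E * fps_deriv P"
    and "E $ 0 = 1" "W $ 0 = 0"
  defines "c \<equiv> fps_nth W" and "p \<equiv> fps_nth P"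
  shows "p 1 = c 1" "p 2 = c 2" "p 3 = c 3 - (1/6) * c 1 ^ 3"
    "p 4 = c 4 - (1/2) * c 1 ^ 2 * c 2"
    "p 5 = c 5 - (1/2) * c 1 * c 2 ^ 2 - (1/2) * c 1 ^ 2 * c 3 + (3/40) * c 1 ^ 5"
    "p 6 = c 6 - (1/6) * c 2 ^ 3 - c 1 * c 2 * c 3 - (1/2) * c 1 ^ 2 * c 4 + (3/8) * c 1 ^ 4 * c 2"
proof -
  include coeff_recursion_simps
  define e where "e = fps_nth E"
  note e = sinh_fps_coeffs[OF sq assms(3,4), folded c_def e_def]
  have rec: "of_nat (n + 1) * e (n + 1) = (\<Sum>i\<le>n. e i * (of_nat (n - i + 1) * p (n - i + 1)))"
    for n
    using arg_cong[OF dv, of "\<lambda>X. X $ n"] by (simp add: fps_mult_nth atLeast0AtMost e_def p_def)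
  have e0: "e 0 = 1"
    using assms by (simp add: e_def)
  show p1: "p 1 = c 1"
    using rec[of 0] by (simp add: e0 e)
  show p2: "p 2 = c 2"
    using rec[of 1] by (simp add: e0 e p1; algebra)
  show p3: "p 3 = c 3 - (1/6) * c 1 ^ 3"
    using rec[of 2] by (simp add: e0 e p1 p2; algebra)
  show p4: "p 4 = c 4 - (1/2) * c 1 ^ 2 * c 2"
    using rec[of 3] by (simp add: e0 e p1 p2 p3; algebra)
  show p5: "p 5 = c 5 - (1/2) * c 1 * c 2 ^ 2 - (1/2) * c 1 ^ 2 * c 3 + (3/40) * c 1 ^ 5"
    using rec[of 4] by (simp add: e0 e p1 p2 p3 p4; algebra)
  show "p 6 = c 6 - (1/6) * c 2 ^ 3 - c 1 * c 2 * c 3 - (1/2) * c 1 ^ 2 * c 4 + (3/8) * c 1 ^ 4 * c 2"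
    using rec[of 5] by (simp add: e0 e p1 p2 p3 p4 p5; algebra)
qed

lemma starlike_arsinh_fps_coeffs:
  fixes W P E F :: "complex fps"
  assumes "E * E = fps_const 2 * (W * E) + 1" "fps_deriv E = E * fps_deriv P"
    and starlike: "fps_X * fps_deriv F = F * (1 + P)"
    and "E $ 0 = 1" "W $ 0 = 0" "P $ 0 = 0" "F $ 0 = 0" "F $ 1 = 1"
  defines "a \<equiv> fps_nth F" and "c \<equiv> fps_nth W"
  shows "a 2 = c 1"
    and "a 3 = (1/2) * c 2 + (1/2) * c 1 ^ 2"
    and "a 4 = (1/3) * c 3 + (1/2) * c 1 * c 2 + (1/9) * c 1 ^ 3"
    and "a 5 = (1/4) * c 4 + (1/8) * c 2 ^ 2 + (1/3) * c 1 * c 3 + (1/8) * c 1 ^ 2 * c 2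
      - (1/72) * c 1 ^ 4"
    and "a 6 = (1/5) * c 5 + (1/6) * c 2 * c 3 + (1/4) * c 1 * c 4 + (1/40) * c 1 * c 2 ^ 2
      + (1/15) * c 1 ^ 2 * c 3 - (5/72) * c 1 ^ 3 * c 2 - (1/225) * c 1 ^ 5"
    and "a 7 = (1/6) * c 6 + (1/18) * c 3 ^ 2 + (1/8) * c 2 * c 4 - (1/144) * c 2 ^ 3
      + (1/5) * c 1 * c 5 + (1/24) * c 1 ^ 2 * c 4 - (1/10) * c 1 ^ 2 * c 2 ^ 2
      - (17/270) * c 1 ^ 3 * c 3 - (1/144) * c 1 ^ 4 * c 2 + (281/32400) * c 1 ^ 6"
proof -
  include coeff_recursion_simps
  define p where "p = fps_nth P"
  note p = arsinh_fps_coeffs[OF assms(1,2,4,5), folded c_def p_def]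
  have rec: "of_nat n * a n = (\<Sum>i\<le>n. a i * ((if n - i = 0 then 1 else 0) + p (n - i)))"
    if "n \<ge> 1" for n
  proof -
    have "(fps_X * fps_deriv F) $ n = of_nat n * a n"
      using that by (simp add: a_def)
    then show ?thesis
      using arg_cong[OF starlike, of "\<lambda>X. X $ n"] by (simp add: fps_mult_nth atLeast0AtMost a_def p_def)
  qed
  have a0: "a 0 = 0" and a1: "a 1 = 1" and p0: "p 0 = 0"
    using assms by (simp_all add: a_def p_def)
  show a2: "a 2 = c 1"
    using rec[of 2] by (simp add: a0 a1 p0 p; algebra)
  show a3: "a 3 = (1/2) * c 2 + (1/2) * c 1 ^ 2"
    using rec[of 3] by (simp add: a0 a1 a2 p0 p; algebra)
  show a4: "a 4 = (1/3) * c 3 + (1/2) * c 1 * c 2 + (1/9) * c 1 ^ 3"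
    using rec[of 4] by (simp add: a0 a1 a2 a3 p0 p; algebra)
  show a5: "a 5 = (1/4) * c 4 + (1/8) * c 2 ^ 2 + (1/3) * c 1 * c 3 + (1/8) * c 1 ^ 2 * c 2
      - (1/72) * c 1 ^ 4"
    using rec[of 5] by (simp add: a0 a1 a2 a3 a4 p0 p; algebra)
  show a6: "a 6 = (1/5) * c 5 + (1/6) * c 2 * c 3 + (1/4) * c 1 * c 4 + (1/40) * c 1 * c 2 ^ 2
      + (1/15) * c 1 ^ 2 * c 3 - (5/72) * c 1 ^ 3 * c 2 - (1/225) * c 1 ^ 5"
    using rec[of 6] by (simp add: a0 a1 a2 a3 a4 a5 p0 p; algebra)
  show "a 7 = (1/6) * c 6 + (1/18) * c 3 ^ 2 + (1/8) * c 2 * c 4 - (1/144) * c 2 ^ 3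
      + (1/5) * c 1 * c 5 + (1/24) * c 1 ^ 2 * c 4 - (1/10) * c 1 ^ 2 * c 2 ^ 2
      - (17/270) * c 1 ^ 3 * c 3 - (1/144) * c 1 ^ 4 * c 2 + (281/32400) * c 1 ^ 6"
    using rec[of 7] by (simp add: a0 a1 a2 a3 a4 a5 a6 p0 p; algebra)
qed

lemma exp_arsinh_fps_identities:
  fixes w :: "complex \<Rightarrow> complex" and P W E :: "complex fps"
  assumes Pexp: "(\<lambda>z. arsinh (w z)) has_fps_expansion P" and Wexp: "w has_fps_expansion W"
    and P0: "P $ 0 = 0"
  defines "E \<equiv> fps_compose (fps_exp 1) P"
  shows "E * E = fps_const 2 * (W * E) + 1" and "fps_deriv E = E * fps_deriv P" and "E $ 0 = 1"
proof -
  have "((\<lambda>x. exp (1 * x)) \<circ> (\<lambda>z. arsinh (w z))) has_fps_expansion E"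
    unfolding E_def by (rule has_fps_expansion_compose[OF has_fps_expansion_exp Pexp P0])
  then have Eexp: "(\<lambda>z. exp (arsinh (w z))) has_fps_expansion E"
    by (simp add: o_def)
  show "E * E = fps_const 2 * (W * E) + 1"
  proof (rule has_fps_expansion_eq_if_eventually_eq)
    show "(\<lambda>z. exp (arsinh (w z)) * exp (arsinh (w z))) has_fps_expansion E * E"
      by (intro has_fps_expansion_mult Eexp)
    have "(\<lambda>z. 2 * (w z * exp (arsinh (w z))) + 1) has_fps_expansion fps_const 2 * (W * E) + fps_const 1"
      by (intro has_fps_expansion_add has_fps_expansion_cmult_left has_fps_expansion_mult Wexp Eexp
          has_fps_expansion_const)
    then show "(\<lambda>z. 2 * (w z * exp (arsinh (w z))) + 1) has_fps_expansion fps_const 2 * (W * E) + 1"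
      by simp
  qed (simp add: exp_arsinh_quadratic)
  show "fps_deriv E = E * fps_deriv P"
    unfolding E_def using fps_compose_deriv[OF P0, of "fps_exp 1"] by simp
  show "E $ 0 = 1"
    unfolding E_def by (simp add: P0)
qed

lemma starlike_fps_identity:
  fixes f p :: "complex \<Rightarrow> complex"
  assumes holf: "f holomorphic_on ball 0 1" and injf: "inj_on f (ball 0 1)" and f0: "f 0 = 0"
    and Pexp: "p has_fps_expansion P"
    and starlike: "\<And>z. z \<in> ball 0 1 \<Longrightarrow> z \<noteq> 0 \<Longrightarrow> z * deriv f z / f z = 1 + p z"
  defines "F \<equiv> fps_expansion f 0"
  shows "fps_X * fps_deriv F = F * (1 + P)"
proof (rule has_fps_expansion_eq_if_eventually_eq)
  have Fexp: "f has_fps_expansion F"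
    unfolding F_def using holf by (intro has_fps_expansion_fps_expansion) auto
  then show "(\<lambda>z. z * deriv f z) has_fps_expansion fps_X * fps_deriv F"
    by (intro has_fps_expansion_mult has_fps_expansion_fps_X has_fps_expansion_deriv)
  have "(\<lambda>z. f z * (1 + p z)) has_fps_expansion F * (fps_const 1 + P)"
    by (intro has_fps_expansion_mult has_fps_expansion_add Fexp Pexp has_fps_expansion_const)
  then show "(\<lambda>z. f z * (1 + p z)) has_fps_expansion F * (1 + P)"
    by simp
  show "eventually (\<lambda>z. z * deriv f z = f z * (1 + p z)) (nhds 0)"
    using eventually_in_unit_ball
  proof eventually_elim
    case (elim z)
    show ?case
    proof (cases "z = 0")
      case False
      then have "f z \<noteq> f 0"
        using injf elim inj_onD by fastforce
      then show ?thesis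
        using starlike[OF elim False] f0 by (simp add: field_simps)
    qed (simp add: f0)
  qed
qed

lemma S_star_rho_fps_identities:
  assumes "f \<in> S_star_rho"
  obtains w and P E :: "complex fps"
  where "w holomorphic_on ball 0 1" "w ` ball 0 1 \<subseteq> ball 0 1" "w 0 = 0"
    and "E * E = fps_const 2 * (fps_expansion w 0 * E) + 1" "fps_deriv E = E * fps_deriv P"
    and "fps_X * fps_deriv (fps_expansion f 0) = fps_expansion f 0 * (1 + P)"
    and "E $ 0 = 1" "fps_expansion w 0 $ 0 = 0" "P $ 0 = 0"
    and "fps_expansion f 0 $ 0 = 0" "fps_expansion f 0 $ 1 = 1"
proof -
  have holf: "f holomorphic_on ball 0 1" and injf: "inj_on f (ball 0 1)" and f0: "f 0 = 0"
    and df0: "deriv f 0 = 1"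
    and sub: "subordinate (\<lambda>z. if z = 0 then 1 else z * deriv f z / f z) (\<lambda>z. 1 + arsinh z)"
    using assms unfolding S_star_rho_def by auto
  obtain w where holw: "w holomorphic_on ball 0 1" and wb: "w ` ball 0 1 \<subseteq> ball 0 1"
    and w0: "w 0 = 0"
    and wsub: "\<And>z. z \<in> ball 0 1 \<Longrightarrow>
      (if z = 0 then 1 else z * deriv f z / f z) = 1 + arsinh (w z)"
    using sub unfolding subordinate_def by blast
  define P where "P = fps_expansion (\<lambda>z. arsinh (w z)) 0"
  have "(\<lambda>z. arsinh (w z)) holomorphic_on ball 0 1"
    by (rule holomorphic_on_compose_gen[OF holw holomorphic_on_arsinh_ball wb, unfolded o_def])
  then have Pexp: "(\<lambda>z. arsinh (w z)) has_fps_expansion P"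
    unfolding P_def by (intro has_fps_expansion_fps_expansion) auto
  have Wexp: "w has_fps_expansion fps_expansion w 0"
    using holw by (intro has_fps_expansion_fps_expansion) auto
  have P0: "P $ 0 = 0"
    using fps_nth_fps_expansion[OF Pexp, of 0] by (simp add: w0)
  show ?thesis
  proof (rule that[OF holw wb w0 exp_arsinh_fps_identities(1,2)[OF Pexp Wexp P0]
        starlike_fps_identity[OF holf injf f0 Pexp] exp_arsinh_fps_identities(3)[OF Pexp Wexp P0] _ P0])
    show "z * deriv f z / f z = 1 + arsinh (w z)" if "z \<in> ball 0 1" "z \<noteq> 0" for z
      using wsub[OF that(1)] that(2) by simp
    show "fps_expansion w 0 $ 0 = 0"
      using w0 by (simp add: fps_expansion_def)
    show "fps_expansion f 0 $ 0 = 0" "fps_expansion f 0 $ 1 = 1"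
      using f0 df0 by (simp_all add: fps_expansion_def)
  qed
qed

section \<open>The Hankel determinant as a polynomial in the Schwarz coefficients\<close>

lemma leibniz_expansion_4:
  fixes M :: "nat \<Rightarrow> nat \<Rightarrow> complex"
  shows "(\<Sum>p | p permutes {0..<4::nat}. of_int (sign p) * (\<Prod>i<4. M i (p i))) =
   M 0 0 * M 1 1 * M 2 2 * M 3 3 - M 0 0 * M 1 1 * M 2 3 * M 3 2
 - M 0 0 * M 1 2 * M 2 1 * M 3 3 + M 0 0 * M 1 2 * M 2 3 * M 3 1
 + M 0 0 * M 1 3 * M 2 1 * M 3 2 - M 0 0 * M 1 3 * M 2 2 * M 3 1
 - M 0 1 * M 1 0 * M 2 2 * M 3 3 + M 0 1 * M 1 0 * M 2 3 * M 3 2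
 + M 0 1 * M 1 2 * M 2 0 * M 3 3 - M 0 1 * M 1 2 * M 2 3 * M 3 0
 - M 0 1 * M 1 3 * M 2 0 * M 3 2 + M 0 1 * M 1 3 * M 2 2 * M 3 0
 + M 0 2 * M 1 0 * M 2 1 * M 3 3 - M 0 2 * M 1 0 * M 2 3 * M 3 1
 - M 0 2 * M 1 1 * M 2 0 * M 3 3 + M 0 2 * M 1 1 * M 2 3 * M 3 0
 + M 0 2 * M 1 3 * M 2 0 * M 3 1 - M 0 2 * M 1 3 * M 2 1 * M 3 0
 - M 0 3 * M 1 0 * M 2 1 * M 3 2 + M 0 3 * M 1 0 * M 2 2 * M 3 1
 + M 0 3 * M 1 1 * M 2 0 * M 3 2 - M 0 3 * M 1 1 * M 2 2 * M 3 0
 - M 0 3 * M 1 2 * M 2 0 * M 3 1 + M 0 3 * M 1 2 * M 2 1 * M 3 0"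
proof -
  have four: "{0..<4::nat} = insert 0 (insert 1 (insert 2 {3}))"
    by auto
  have ins1: "finite (insert 1 (insert 2 {3::nat}))" "0 \<notin> insert 1 (insert 2 {3::nat})"
    and ins2: "finite (insert 2 {3::nat})" "1 \<notin> insert 2 {3::nat}"
    and ins3: "finite {3::nat}" "2 \<notin> {3::nat}"
    by auto
  have prod4: "(\<Prod>i<(4::nat). g i) = g 0 * g 1 * g 2 * g 3" for g :: "nat \<Rightarrow> complex"
    by (simp add: numeral_eq_Suc lessThan_Suc)
  have sign_transpose: "sign (Transposition.transpose a b \<circ> q) = (if a = b then 1 else -1) * sign q"
    if "permutation q" for a b :: nat and q
    using that by (simp add: sign_compose permutation_swap_id sign_swap_id)
  have permutation_transpose: "permutation (Transposition.transpose a b \<circ> q)"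
    if "permutation q" for a b :: nat and q
    using that by (simp add: permutation_compose permutation_swap_id)
  show ?thesis
    unfolding four prod4 sum_over_permutations_insert[OF ins1] sum_over_permutations_insert[OF ins2]
      sum_over_permutations_insert[OF ins3] permutes_sing
    by (simp add: sign_transpose permutation_transpose permutation_swap_id sign_swap_id
        transpose_def algebra_simps)
qed

lemma taylor_coeff_eq_fps_nth: "taylor_coeff f = fps_nth (fps_expansion f 0)"
  by (simp add: fun_eq_iff taylor_coeff_def fps_expansion_def)

lemma hankel41_expand:
  fixes f :: "complex \<Rightarrow> complex"
  defines "a \<equiv> fps_nth (fps_expansion f 0)"
  shows "hankel41 f =
     a 3 * a 5 * a 7 - a 3 * a 6 ^ 2 - a 4 ^ 2 * a 7 + 2 * a 4 * a 5 * a 6 - a 5 ^ 3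
     - a 2 ^ 2 * a 5 * a 7 + a 2 ^ 2 * a 6 ^ 2 + 2 * a 2 * a 3 * a 4 * a 7 - 2 * a 2 * a 3 * a 5 * a 6
     - 2 * a 2 * a 4 ^ 2 * a 6 + 2 * a 2 * a 4 * a 5 ^ 2 - a 3 ^ 3 * a 7 + 2 * a 3 ^ 2 * a 4 * a 6
     + a 3 ^ 2 * a 5 ^ 2 - 3 * a 3 * a 4 ^ 2 * a 5 + a 4 ^ 4"
  unfolding hankel41_def Let_def leibniz_expansion_4 a_def taylor_coeff_eq_fps_nth
  by (simp add: numeral_eq_Suc)

type_synonym monomial = "real \<times> nat \<times> nat \<times> nat \<times> nat \<times> nat \<times> nat"

definition eval_monomials :: "monomial list \<Rightarrow> (nat \<Rightarrow> complex) \<Rightarrow> complex" where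
  "eval_monomials ms c = (\<Sum>(k, e1, e2, e3, e4, e5, e6) \<leftarrow> ms.
     of_real k * c 1 ^ e1 * c 2 ^ e2 * c 3 ^ e3 * c 4 ^ e4 * c 5 ^ e5 * c 6 ^ e6)"

definition monomials_majorant :: "monomial list \<Rightarrow> real \<Rightarrow> real \<Rightarrow> real" where
  "monomials_majorant ms x y = (\<Sum>(k, e1, e2, _) \<leftarrow> ms. \<bar>k\<bar> * x ^ e1 * y ^ e2)"

text \<open>\<open>H_{4,1}\<close> as a polynomial in the Schwarz coefficients; the entry
  \<open>(k, e_1, ..., e_6)\<close> stands for \<open>k c_1^e_1 ... c_6^e_6\<close>. The list was produced by computer
  algebra and is certified by \<open>hankel41_schwarz_identity\<close>.\<close>
definition hankel41_monomials :: "monomial list" where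
  "hankel41_monomials =
    [(-1/64, 0, 0, 0, 3, 0, 0), (1/30, 0, 0, 1, 1, 1, 0), (-1/54, 0, 0, 2, 0, 0, 1), (1/162, 0, 0, 4, 0, 0, 0),
     (-1/50, 0, 1, 0, 0, 2, 0), (1/48, 0, 1, 0, 1, 0, 1), (-1/48, 0, 1, 2, 1, 0, 0), (1/128, 0, 2, 0, 2, 0, 0),
     (1/60, 0, 2, 1, 0, 1, 0), (-1/96, 0, 3, 0, 0, 0, 1), (11/2592, 0, 3, 2, 0, 0, 0), (-11/2304, 0, 4, 0, 1, 0, 0),
     (11/4608, 0, 6, 0, 0, 0, 0), (1/48, 1, 0, 1, 2, 0, 0), (-1/45, 1, 0, 2, 0, 1, 0), (-1/40, 1, 1, 0, 1, 1, 0),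
     (1/36, 1, 1, 1, 0, 0, 1), (1/36, 1, 1, 3, 0, 0, 0), (-7/120, 1, 2, 1, 1, 0, 0), (13/400, 1, 3, 0, 0, 1, 0),
     (-37/8640, 1, 4, 1, 0, 0, 0), (1/50, 2, 0, 0, 0, 2, 0), (-1/48, 2, 0, 0, 1, 0, 1), (-31/2160, 2, 0, 2, 1, 0, 0),
     (11/384, 2, 1, 0, 2, 0, 0), (1/300, 2, 1, 1, 0, 1, 0), (-1/48, 2, 2, 0, 0, 0, 1), (-13/720, 2, 2, 2, 0, 0, 0),
     (107/5760, 2, 3, 0, 1, 0, 0), (-971/115200, 2, 5, 0, 0, 0, 0), (-1/72, 3, 0, 0, 1, 1, 0), (5/324, 3, 0, 1, 0, 0, 1),
     (49/4860, 3, 0, 3, 0, 0, 0), (1/180, 3, 1, 1, 1, 0, 0), (-13/900, 3, 2, 0, 0, 1, 0), (4861/194400, 3, 3, 1, 0, 0, 0),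
     (11/1152, 4, 0, 0, 2, 0, 0), (-49/2700, 4, 0, 1, 0, 1, 0), (1/108, 4, 1, 0, 0, 0, 1), (-767/32400, 4, 1, 2, 0, 0, 0),
     (-1/768, 4, 2, 0, 1, 0, 0), (-1973/518400, 4, 4, 0, 0, 0, 0), (11/2025, 5, 0, 1, 1, 0, 0), (29/4500, 5, 1, 0, 0, 1, 0),
     (59/4800, 5, 2, 1, 0, 0, 0), (-25/7776, 6, 0, 0, 0, 0, 1), (413/194400, 6, 0, 2, 0, 0, 0), (-217/14400, 6, 1, 0, 1, 0, 0),
     (-230171/46656000, 6, 3, 0, 0, 0, 0), (581/162000, 7, 0, 0, 0, 1, 0), (2239/486000, 7, 1, 1, 0, 0, 0), (71/311040, 8, 0, 0, 1, 0, 0),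
     (1633/648000, 8, 2, 0, 0, 0, 0), (-28469/17496000, 9, 0, 1, 0, 0, 0), (-136729/233280000, 10, 1, 0, 0, 0, 0), (337561/2099520000, 12, 0, 0, 0, 0, 0)]"

lemma hankel41_schwarz_identity:
  fixes a c :: "nat \<Rightarrow> complex"
  assumes "a 2 = c 1"
    and "a 3 = (1/2) * c 2 + (1/2) * c 1 ^ 2"
    and "a 4 = (1/3) * c 3 + (1/2) * c 1 * c 2 + (1/9) * c 1 ^ 3"
    and "a 5 = (1/4) * c 4 + (1/8) * c 2 ^ 2 + (1/3) * c 1 * c 3 + (1/8) * c 1 ^ 2 * c 2 - (1/72) * c 1 ^ 4"
    and "a 6 = (1/5) * c 5 + (1/6) * c 2 * c 3 + (1/4) * c 1 * c 4 + (1/40) * c 1 * c 2 ^ 2 + (1/15) * c 1 ^ 2 * c 3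
      - (5/72) * c 1 ^ 3 * c 2 - (1/225) * c 1 ^ 5"
    and "a 7 = (1/6) * c 6 + (1/18) * c 3 ^ 2 + (1/8) * c 2 * c 4 - (1/144) * c 2 ^ 3 + (1/5) * c 1 * c 5
      + (1/24) * c 1 ^ 2 * c 4 - (1/10) * c 1 ^ 2 * c 2 ^ 2 - (17/270) * c 1 ^ 3 * c 3
      - (1/144) * c 1 ^ 4 * c 2 + (281/32400) * c 1 ^ 6"
  shows "a 3 * a 5 * a 7 - a 3 * a 6 ^ 2 - a 4 ^ 2 * a 7 + 2 * a 4 * a 5 * a 6 - a 5 ^ 3
     - a 2 ^ 2 * a 5 * a 7 + a 2 ^ 2 * a 6 ^ 2 + 2 * a 2 * a 3 * a 4 * a 7 - 2 * a 2 * a 3 * a 5 * a 6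
     - 2 * a 2 * a 4 ^ 2 * a 6 + 2 * a 2 * a 4 * a 5 ^ 2 - a 3 ^ 3 * a 7 + 2 * a 3 ^ 2 * a 4 * a 6
     + a 3 ^ 2 * a 5 ^ 2 - 3 * a 3 * a 4 ^ 2 * a 5 + a 4 ^ 4 = eval_monomials hankel41_monomials c"
  unfolding assms eval_monomials_def hankel41_monomials_def
  by (simp only: list.map sum_list_simps prod.case of_real_divide of_real_minus of_real_numeral of_real_1) algebra

lemma S_star_rho_hankel41_eq:
  assumes "f \<in> S_star_rho"
  obtains w where "w holomorphic_on ball 0 1" "w ` ball 0 1 \<subseteq> ball 0 1" "w 0 = 0"
    and "hankel41 f = eval_monomials hankel41_monomials (fps_nth (fps_expansion w 0))"
proof -
  obtain w and P E :: "complex fps"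
    where schwarz: "w holomorphic_on ball 0 1" "w ` ball 0 1 \<subseteq> ball 0 1" "w 0 = 0"
    and ids: "E * E = fps_const 2 * (fps_expansion w 0 * E) + 1" "fps_deriv E = E * fps_deriv P"
      "fps_X * fps_deriv (fps_expansion f 0) = fps_expansion f 0 * (1 + P)"
      "E $ 0 = 1" "fps_expansion w 0 $ 0 = 0" "P $ 0 = 0"
      "fps_expansion f 0 $ 0 = 0" "fps_expansion f 0 $ 1 = 1"
    by (rule S_star_rho_fps_identities[OF assms])
  have "hankel41 f = eval_monomials hankel41_monomials (fps_nth (fps_expansion w 0))"
    unfolding hankel41_expand
    by (rule hankel41_schwarz_identity[of "fps_nth (fps_expansion f 0)" "fps_nth (fps_expansion w 0)",
          OF starlike_arsinh_fps_coeffs[OF ids]])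
  with schwarz show ?thesis
    by (rule that)
qed

section \<open>Bounding the polynomial\<close>

lemma norm_eval_monomials_le:
  assumes "\<And>n. 3 \<le> n \<Longrightarrow> n \<le> 6 \<Longrightarrow> cmod (c n) \<le> 1"
  shows "cmod (eval_monomials ms c) \<le> monomials_majorant ms (cmod (c 1)) (cmod (c 2))"
proof (induction ms)
  case Nil
  then show ?case by (simp add: eval_monomials_def monomials_majorant_def)
next
  case (Cons m ms)
  obtain k e1 e2 e3 e4 e5 e6 where m: "m = (k, e1, e2, e3, e4, e5, e6)"
    by (cases m) auto
  define rest where "rest = c 3 ^ e3 * c 4 ^ e4 * c 5 ^ e5 * c 6 ^ e6"
  have "cmod rest \<le> 1"
    using assms by (simp add: rest_def norm_mult norm_power mult_le_one power_le_one)
  have "cmod (of_real k * c 1 ^ e1 * c 2 ^ e2 * c 3 ^ e3 * c 4 ^ e4 * c 5 ^ e5 * c 6 ^ e6)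
      = (\<bar>k\<bar> * cmod (c 1) ^ e1 * cmod (c 2) ^ e2) * cmod rest"
    by (simp add: rest_def norm_mult norm_power mult_ac)
  also have "\<dots> \<le> \<bar>k\<bar> * cmod (c 1) ^ e1 * cmod (c 2) ^ e2"
    using \<open>cmod rest \<le> 1\<close> by (simp add: mult_left_le)
  finally have "cmod (of_real k * c 1 ^ e1 * c 2 ^ e2 * c 3 ^ e3 * c 4 ^ e4 * c 5 ^ e5 * c 6 ^ e6)
      \<le> \<bar>k\<bar> * cmod (c 1) ^ e1 * cmod (c 2) ^ e2" .
  with Cons.IH show ?case
    by (simp add: m eval_monomials_def monomials_majorant_def norm_triangle_le add_mono)
qed

lemma monomials_majorant_mono:
  assumes "0 \<le> x" "x \<le> u" "0 \<le> y" "y \<le> v"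
  shows "monomials_majorant ms x y \<le> monomials_majorant ms u v"
proof (induction ms)
  case (Cons m ms)
  then show ?case
    using assms by (cases m) (auto simp: monomials_majorant_def intro!: add_mono mult_mono power_mono)
qed (simp add: monomials_majorant_def)

lemma hankel41_majorant_le:
  assumes "0 \<le> x" "x \<le> 1" "0 \<le> y" "y \<le> 1 - x\<^sup>2"
  shows "monomials_majorant hankel41_monomials x y \<le> 0.428001"
proof -
  \<comment> \<open>On a strip \<open>l \<le> x \<le> u\<close> also \<open>y \<le> 1 - l^2\<close>, so monotonicity bounds the majorant
    by its value at \<open>(u, 1 - l^2)\<close>.\<close>
  have strip: "monomials_majorant hankel41_monomials x y \<le> 0.428001"
    if "l \<le> x" "x \<le> u" "0 \<le> l" "monomials_majorant hankel41_monomials u (1 - l\<^sup>2) \<le> 0.428001"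
    for l u :: real
  proof -
    have "y \<le> 1 - l\<^sup>2"
      using assms that power_mono[of l x 2] by linarith
    then show ?thesis
      using that assms monomials_majorant_mono[of x u y "1 - l\<^sup>2" hankel41_monomials] by linarith
  qed
  have "x \<le> 1/4 \<or> 1/4 \<le> x \<and> x \<le> 1/2 \<or> 1/2 \<le> x \<and> x \<le> 3/4 \<or> 3/4 \<le> x"
    by linarith
  then show ?thesis
  proof (elim disjE conjE)
    assume "x \<le> 1/4"
    then show ?thesis
      by (intro strip[of 0 "1/4"]) (simp_all add: assms hankel41_monomials_def monomials_majorant_def power_divide)
  next
    assume "1/4 \<le> x" "x \<le> 1/2"
    then show ?thesis
      by (intro strip[of "1/4" "1/2"]) (simp_all add: hankel41_monomials_def monomials_majorant_def power_divide)
  next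
    assume "1/2 \<le> x" "x \<le> 3/4"
    then show ?thesis
      by (intro strip[of "1/2" "3/4"]) (simp_all add: hankel41_monomials_def monomials_majorant_def power_divide)
  next
    assume "3/4 \<le> x"
    then show ?thesis
      by (intro strip[of "3/4" 1]) (simp_all add: assms hankel41_monomials_def monomials_majorant_def power_divide)
  qed
qed

theorem theorem3p2:
  assumes "f \<in> S_star_rho"
  shows "cmod (hankel41 f) \<le> 0.428001"
proof -
  obtain w where holw: "w holomorphic_on ball 0 1" and wb: "w ` ball 0 1 \<subseteq> ball 0 1"
    and w0: "w 0 = 0"
    and hankel: "hankel41 f = eval_monomials hankel41_monomials (fps_nth (fps_expansion w 0))"
    using S_star_rho_hankel41_eq[OF assms] by blast
  define c where "c = fps_nth (fps_expansion w 0)"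
  have c_le_1: "cmod (c n) \<le> 1" if "n > 0" for n
    unfolding c_def using self_map_unit_ball_coeff_le_1[OF holw wb that] .
  have "cmod (hankel41 f) \<le> monomials_majorant hankel41_monomials (cmod (c 1)) (cmod (c 2))"
    unfolding hankel c_def[symmetric] by (rule norm_eval_monomials_le) (simp add: c_le_1)
  also have "\<dots> \<le> 0.428001"
    using c_le_1[of 1] schwarz_second_coeff_le[OF holw wb w0] by (intro hankel41_majorant_le) (auto simp: c_def)
  finally show ?thesis .
qed

end
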